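(* Let $W=(w_{ij})\in (\mathbb{R}_{>0})^{n\times m}$, $T=T(W)=(t_{ij})$ and $s\in\mathbb{C}$. Then $$\sum_{i=1}^p \frac{s}{w_{i,p-i+1}} + \sum {}^{'} \frac{1}{w_{ij}} = \mathcal{E}_s(T),$$ where $p=n\wedge m$ and $\sum^{'}$ denotes the sum over $1\le i\le n,\ 1\le j\le m$ such that $j\ne p-i+1$.
   Context: The geometric RSK map $T$ on $(\mathbb{R}_{>0})^{n\times m}$ is defined through local moves. For $2\le i\le n$, $2\le j\le m$, the map $l_{ij}$ replaces the submatrix $\begin{pmatrix} x_{i-1,j-1}& x_{i-1,j}\\ x_{i,j-1}& x_{ij}\end{pmatrix}=\begin{pmatrix} a& b\\ c& d\end{pmatrix}$ by $\begin{pmatrix} bc/(ab+ac) & b\\ c& d(b+c) \end{pmatrix}$, leaving the other entries unchanged. For $2\le i\le n$, $l_{i1}$ replaces $x_{i1}$ by $x_{i-1,1}x_{i1}$; for $2\le j\le m$, $l_{1j}$ replaces $x_{1j}$ by $x_{1,j-1}x_{1j}$; $l_{11}$ is the identity. Set $\pi^j_i=l_{ij}\circ\cdots\circ l_{i1}$, $R_i=\pi_1^{m-i+1}\circ\cdots\circ\pi^m_i$ if $i\le m$ and $R_i=\pi^1_{i-m+1}\circ\cdots\circ\pi^m_i$ if $i\ge m$, and $T=R_n\circ\cdots\circ R_1$. For $X=(x_{ij})\in(\mathbb{R}_{>0})^{n\times m}$ and $s\in\mathbb{C}$, $\mathcal{E}_s(X)=\frac{s}{x_{11}}+\sum_{i,j}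 \frac{x_{i-1,j}+x_{i,j-1}}{x_{ij}}$, the sum over $1\le i\le n$, $1\le j\le m$, with the convention $x_{ij}=0$ if $i=0$ or $j=0$. *)

theory Defs
  imports Complex_Main
begin

text \<open>Matrices in (R_{>0})^{n x m} are represented as functions nat => nat => real,
  with the relevant entries at indices 1..n, 1..m.\<close>

type_synonym mat = "nat \<Rightarrow> nat \<Rightarrow> real"

definition mupd :: "mat \<Rightarrow> nat \<Rightarrow> nat \<Rightarrow> real \<Rightarrow> mat" where
  "mupd X i j v = (\<lambda>a b. if a = i \<and> b = j then v else X a b)"

definition lmove :: "nat \<Rightarrow> nat \<Rightarrow> mat \<Rightarrow> mat" where
  "lmove i j X =
    (if i = 1 \<and> j = 1 then X
     else if j = 1 then mupd X i 1 (X (i-1) 1 * X i 1)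
     else if i = 1 then mupd X 1 j (X 1 (j-1) * X 1 j)
     else (let a = X (i-1) (j-1); b = X (i-1) j; c = X i (j-1); d = X i j
           in mupd (mupd X (i-1) (j-1) (b * c / (a * b + a * c))) i j (d * (b + c))))"

fun rsk_pi :: "nat \<Rightarrow> nat \<Rightarrow> mat \<Rightarrow> mat" where
  "rsk_pi i 0 = id"
| "rsk_pi i (Suc j) = lmove i (Suc j) \<circ> rsk_pi i j"

text \<open>R_i = pi_{lo}^{m-i+lo} o ... o pi_i^m, with lo = max 1 (i-m+1);
  the rightmost factor pi_i^m is applied first.\<close>
definition rsk_R :: "nat \<Rightarrow> nat \<Rightarrow> mat \<Rightarrow> mat" where
  "rsk_R m i = fold (\<lambda>k. rsk_pi k (m + k - i)) (rev [max 1 (i + 1 - m)..<i + 1])"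

definition rsk_T :: "nat \<Rightarrow> nat \<Rightarrow> mat \<Rightarrow> mat" where
  "rsk_T n m = fold (rsk_R m) [1..<n + 1]"

definition energy :: "nat \<Rightarrow> nat \<Rightarrow> complex \<Rightarrow> mat \<Rightarrow> complex" where
  "energy n m s X =
    (let x = (\<lambda>i j. if i = 0 \<or> j = 0 then 0 else X i j) in
     s / complex_of_real (X 1 1) +
     (\<Sum>i\<in>{1..n}. \<Sum>j\<in>{1..m}.
        complex_of_real ((x (i-1) j + x i (j-1)) / X i j)))"

end

theory Submission
  imports Defs
begin

text \<open>For \<open>s = 1\<close> the identity reads \<open>\<E>\<^sub>1(T(W)) = \<Sum>\<^sub>i\<^sub>j 1 / w\<^sub>i\<^sub>j\<close>. Call a cell processed once
  the local move at it has been performed, and weigh a matrix by its \<open>\<E>\<^sub>1\<close>-terms at the processed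
  cells plus \<open>1 / x\<^sub>i\<^sub>j\<close> at the others. Moves in columns at distance at least two commute, so
  the moves of \<open>T\<close> can be regrouped into chains along antidiagonals; an elementary rational
  identity shows that each chain keeps the weight while processing exactly one new cell.
  For general \<open>s\<close> only the term \<open>(s - 1) / t\<^sub>1\<^sub>1\<close> is added. Doubling the entries of \<open>W\<close> on the
  antidiagonal \<open>i + j = p + 1\<close> doubles \<open>T(W)\<close>, since every local move is compatible with the
  corresponding rescaling; comparing the case \<open>s = 1\<close> for the two matrices isolates
  \<open>1 / t\<^sub>1\<^sub>1\<close> as the sum of \<open>1 / w\<^sub>i\<^sub>j\<close> over that antidiagonal.\<close>

section \<open>Regrouping the local moves\<close>

lemma lmove_eq_off_columns: "q \<noteq> j \<Longrightarrow> q \<noteq> j - 1 \<Longrightarrow> lmove i j X p q = X p q"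
  by (simp add: lmove_def mupd_def Let_def)

lemma lmove_cong_columns:
  assumes "\<And>p q. q = j - 1 \<or> q = j \<Longrightarrow> X p q = Y p q" and "q = j - 1 \<or> q = j"
  shows "lmove i j X p q = lmove i j Y p q"
proof -
  have "X p' (j - 1) = Y p' (j - 1)" "X p' j = Y p' j" for p' using assms(1) by auto
  with assms(2) show ?thesis by (auto simp: lmove_def mupd_def Let_def)
qed

lemma lmove_lmove_commute:
  assumes "j + 2 \<le> b"
  shows "lmove a b (lmove i j X) = lmove i j (lmove a b X)"
proof (intro ext)
  fix p q
  show "lmove a b (lmove i j X) p q = lmove i j (lmove a b X) p q"
  proof (cases "q = b - 1 \<or> q = b")
    case True
    have "lmove a b (lmove i j X) p q = lmove a b X p q"
      by (rule lmove_cong_columns[OF _ True]) (use assms in \<open>auto intro!: lmove_eq_off_columns\<close>)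
    also have "\<dots> = lmove i j (lmove a b X) p q"
      using True assms by (intro lmove_eq_off_columns[symmetric]) auto
    finally show ?thesis .
  next
    case False
    then have "lmove a b (lmove i j X) p q = lmove i j X p q"
      by (intro lmove_eq_off_columns) auto
    also have "\<dots> = lmove i j (lmove a b X) p q"
    proof (cases "q = j - 1 \<or> q = j")
      case True
      show ?thesis
        by (rule lmove_cong_columns[OF _ True])
          (use assms in \<open>auto intro!: lmove_eq_off_columns[symmetric]\<close>)
    qed (use False in \<open>simp add: lmove_eq_off_columns\<close>)
    finally show ?thesis .
  qed
qed

lemma lmove_rsk_pi_commute: "j + 2 \<le> b \<Longrightarrow> lmove a b \<circ> rsk_pi k j = rsk_pi k j \<circ> lmove a b"
proof (induction j)
  case (Suc j)
  have "lmove a b \<circ> rsk_pi k (Suc j) = (lmove a b \<circ> lmove k (Suc j)) \<circ> rsk_pi k j"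
    by (simp add: comp_assoc)
  also have "lmove a b \<circ> lmove k (Suc j) = lmove k (Suc j) \<circ> lmove a b"
  proof
    show "(lmove a b \<circ> lmove k (Suc j)) Y = (lmove k (Suc j) \<circ> lmove a b) Y" for Y
      using Suc.prems lmove_lmove_commute[of "Suc j" b a k Y] by simp
  qed
  also have "\<dots> \<circ> rsk_pi k j = lmove k (Suc j) \<circ> (lmove a b \<circ> rsk_pi k j)"
    by (simp add: comp_assoc)
  also have "lmove a b \<circ> rsk_pi k j = rsk_pi k j \<circ> lmove a b"
    using Suc by (simp add: comp_def)
  finally show ?case by (simp add: comp_assoc)
qed simp

text \<open>\<open>pi_cascade i c\<close> is \<open>\<pi>\<^sub>1\<^sup>c\<^sup>-\<^sup>i\<^sup>+\<^sup>1 \<circ> \<dots> \<circ> \<pi>\<^sub>i\<^sup>c\<close>, factors with truncated upper index being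
  \<open>\<pi>\<^sub>k\<^sup>0 = id\<close>, so \<open>R\<^sub>i = pi_cascade i m\<close>; \<open>diag_chain i c\<close> is \<open>l\<^sub>1\<^sub>,\<^sub>c\<^sub>-\<^sub>i\<^sub>+\<^sub>1 \<circ> \<dots> \<circ> l\<^sub>i\<^sub>,\<^sub>c\<close>,
  the moves along the antidiagonal through \<open>(i, c)\<close>, cut off at the border.\<close>

fun pi_cascade :: "nat \<Rightarrow> nat \<Rightarrow> mat \<Rightarrow> mat" where
  "pi_cascade 0 c = id"
| "pi_cascade (Suc i) c = pi_cascade i (c - 1) \<circ> rsk_pi (Suc i) c"

fun diag_chain :: "nat \<Rightarrow> nat \<Rightarrow> mat \<Rightarrow> mat" where
  "diag_chain 0 c = id"
| "diag_chain (Suc i) 0 = id"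
| "diag_chain (Suc i) (Suc c) = diag_chain i c \<circ> lmove (Suc i) (Suc c)"

lemma diag_chain_0 [simp]: "diag_chain i 0 = id"
  by (cases i) auto

lemma pi_cascade_0 [simp]: "pi_cascade i 0 = id"
  by (induction i) auto

lemma fold_rsk_pi_eq_pi_cascade:
  "fold (\<lambda>k. rsk_pi k (c + k - i)) (rev [1..<i + 1]) = pi_cascade i c"
proof (induction i arbitrary: c)
  case (Suc i)
  have "fold (\<lambda>k. rsk_pi k (c + k - Suc i)) (rev [1..<i + 1])
      = fold (\<lambda>k. rsk_pi k (c - 1 + k - i)) (rev [1..<i + 1])"
    by (intro ext fold_cong refl arg_cong[where f = "rsk_pi _"]) auto
  then show ?case using Suc by simp
qed simp

lemma rsk_R_eq_pi_cascade: "rsk_R m i = pi_cascade i m"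
proof -
  let ?f = "\<lambda>k. rsk_pi k (m + k - i)" and ?lo = "max 1 (i + 1 - m)"
  have "[1..<i + 1] = [1..<?lo] @ [?lo..<i + 1]"
    using upt_add_eq_append[of 1 ?lo "i + 1 - ?lo"] by auto
  moreover have "fold ?f (rev [1..<?lo]) = id"
    by (rule fold_id) auto
  ultimately show ?thesis
    using fold_rsk_pi_eq_pi_cascade[of m i] by (simp add: rsk_R_def)
qed

lemma lmove_pi_cascade_commute: "c + 2 \<le> b \<Longrightarrow> lmove a b \<circ> pi_cascade i c = pi_cascade i c \<circ> lmove a b"
proof (induction i arbitrary: c)
  case (Suc i)
  have "lmove a b \<circ> pi_cascade i (c - 1) = pi_cascade i (c - 1) \<circ> lmove a b"
    using Suc.IH[of "c - 1"] Suc.prems by (simp add: comp_def)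
  moreover have "lmove a b \<circ> rsk_pi (Suc i) c = rsk_pi (Suc i) c \<circ> lmove a b"
    using Suc.prems by (rule lmove_rsk_pi_commute)
  ultimately show ?case by (metis comp_assoc pi_cascade.simps(2))
qed simp

lemma pi_cascade_Suc: "pi_cascade i (Suc c) = diag_chain i (Suc c) \<circ> pi_cascade i c"
proof (induction i arbitrary: c)
  case (Suc i)
  show ?case
  proof (cases c)
    case c: (Suc c')
    have "pi_cascade (Suc i) (Suc c) = pi_cascade i c \<circ> lmove (Suc i) (Suc c) \<circ> rsk_pi (Suc i) c"
      by (simp add: comp_assoc)
    also have "pi_cascade i c = diag_chain i c \<circ> pi_cascade i c'"
      by (simp only: c Suc.IH)
    also have "diag_chain i c \<circ> pi_cascade i c' \<circ> lmove (Suc i) (Suc c) \<circ> rsk_pi (Suc i) c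
        = diag_chain i c \<circ> (pi_cascade i c' \<circ> lmove (Suc i) (Suc c)) \<circ> rsk_pi (Suc i) c"
      by (simp add: comp_assoc)
    also have "pi_cascade i c' \<circ> lmove (Suc i) (Suc c) = lmove (Suc i) (Suc c) \<circ> pi_cascade i c'"
      using c by (intro lmove_pi_cascade_commute[symmetric]) simp
    finally show ?thesis
      using c by (simp add: comp_assoc)
  qed simp
qed simp

definition positive_on :: "nat \<Rightarrow> nat \<Rightarrow> mat \<Rightarrow> bool" where
  "positive_on n m X \<longleftrightarrow> (\<forall>i j. 1 \<le> i \<longrightarrow> i \<le> n \<longrightarrow> 1 \<le> j \<longrightarrow> j \<le> m \<longrightarrow> X i j > 0)"

lemma positive_onD: "positive_on n m X \<Longrightarrow> 1 \<le> i \<Longrightarrow> i \<le> n \<Longrightarrow> 1 \<le> j \<Longrightarrow> j \<le> m \<Longrightarrow> X i j > 0"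
  by (simp add: positive_on_def)

lemma positive_on_mupd: "positive_on n m X \<Longrightarrow> v > 0 \<Longrightarrow> positive_on n m (mupd X i j v)"
  by (simp add: positive_on_def mupd_def)

lemma positive_on_lmove:
  assumes X: "positive_on n m X" and i: "1 \<le> i" "i \<le> n" and j: "1 \<le> j" "j \<le> m"
  shows "positive_on n m (lmove i j X)"
proof -
  have pos: "X a b > 0" if "a \<in> {i - 1, i}" "b \<in> {j - 1, j}" "a \<noteq> 0" "b \<noteq> 0" for a b
    using that i j by (auto intro: positive_onD[OF X])
  consider "i = 1" "j = 1" | "i \<noteq> 1" "j = 1" | "i = 1" "j \<noteq> 1" | "i \<noteq> 1" "j \<noteq> 1"
    by blast
  then show ?thesis
  proof cases
    case 1
    then show ?thesis by (simp add: lmove_def X)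
  next
    case 2
    then have "X (i - 1) 1 * X i 1 > 0" using i by (simp add: pos)
    with 2 show ?thesis by (simp add: lmove_def positive_on_mupd X)
  next
    case 3
    then have "X 1 (j - 1) * X 1 j > 0" using j by (simp add: pos)
    with 3 show ?thesis by (simp add: lmove_def positive_on_mupd X)
  next
    case 4
    define a b c d where "a = X (i - 1) (j - 1)" "b = X (i - 1) j" "c = X i (j - 1)" "d = X i j"
    have "a > 0" "b > 0" "c > 0" "d > 0"
      using 4 i j by (auto simp: a_b_c_d_def intro!: pos)
    then have "b * c / (a * b + a * c) > 0" "d * (b + c) > 0"
      by (simp_all add: add_pos_pos)
    moreover have "lmove i j X = mupd (mupd X (i - 1) (j - 1) (b * c / (a * b + a * c))) i j (d * (b + c))"
      using 4 by (simp add: lmove_def Let_def a_b_c_d_def)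
    ultimately show ?thesis by (simp add: positive_on_mupd X)
  qed
qed

lemma positive_on_diag_chain:
  "positive_on n m X \<Longrightarrow> i \<le> n \<Longrightarrow> j \<le> m \<Longrightarrow> positive_on n m (diag_chain i j X)"
proof (induction i arbitrary: j X)
  case (Suc i)
  then show ?case by (cases j) (simp_all add: positive_on_lmove)
qed simp

lemma positive_on_pi_cascade:
  "positive_on n m X \<Longrightarrow> i \<le> n \<Longrightarrow> c \<le> m \<Longrightarrow> positive_on n m (pi_cascade i c X)"
  by (induction c) (simp_all add: pi_cascade_Suc positive_on_diag_chain)

lemma positive_on_rsk_R: "positive_on n m X \<Longrightarrow> i \<le> n \<Longrightarrow> positive_on n m (rsk_R m i X)"
  by (simp add: rsk_R_eq_pi_cascade positive_on_pi_cascade)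

lemma positive_on_fold_rsk_R:
  "positive_on n m X \<Longrightarrow> k \<le> n \<Longrightarrow> positive_on n m (fold (rsk_R m) [1..<k + 1] X)"
  by (induction k) (simp_all add: positive_on_rsk_R)

lemma positive_on_rsk_T: "positive_on n m W \<Longrightarrow> positive_on n m (rsk_T n m W)"
  using positive_on_fold_rsk_R[of n m W n] by (simp add: rsk_T_def)

section \<open>Invariance of the mixed energy\<close>

text \<open>The entry at \<open>(0, 1)\<close> is set to \<open>1\<close>, so that the \<open>(1, 1)\<close> summand of \<open>local_energy\<close> is
  the corner term \<open>1 / x\<^sub>1\<^sub>1\<close>: summing \<open>local_energy\<close> over the grid gives \<open>\<E>\<^sub>1\<close>.\<close>

definition ext_entry :: "mat \<Rightarrow> nat \<Rightarrow> nat \<Rightarrow> real" where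
  "ext_entry X i j = (if j = 0 then 0 else if i = 0 then (if j = 1 then 1 else 0) else X i j)"

definition local_energy :: "mat \<Rightarrow> nat \<Rightarrow> nat \<Rightarrow> real" where
  "local_energy X i j = (ext_entry X (i - 1) j + ext_entry X i (j - 1)) / X i j"

text \<open>\<open>inflow_scale i j\<close> is what \<open>l\<^sub>i\<^sub>j\<close> does on the border, and, as far as the mixed energy is
  concerned, what the whole chain \<open>diag_chain i j\<close> does.\<close>

definition inflow_scale :: "nat \<Rightarrow> nat \<Rightarrow> mat \<Rightarrow> mat" where
  "inflow_scale i j X = mupd X i j ((ext_entry X (i - 1) j + ext_entry X i (j - 1)) * X i j)"

definition energy_term :: "(nat \<Rightarrow> nat \<Rightarrow> bool) \<Rightarrow> mat \<Rightarrow> nat \<Rightarrow> nat \<Rightarrow> real" where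
  "energy_term Q X i j = (if Q i j then local_energy X i j else 1 / X i j)"

definition mixed_energy :: "nat \<Rightarrow> nat \<Rightarrow> (nat \<Rightarrow> nat \<Rightarrow> bool) \<Rightarrow> mat \<Rightarrow> real" where
  "mixed_energy n m Q X = (\<Sum>(i, j)\<in>{1..n} \<times> {1..m}. energy_term Q X i j)"

lemma mupd_same [simp]: "mupd X i j (X i j) = X"
  by (auto simp: mupd_def fun_eq_iff)

lemma lmove_border_eq_inflow_scale:
  "1 \<le> i \<Longrightarrow> 1 \<le> j \<Longrightarrow> i = 1 \<or> j = 1 \<Longrightarrow> lmove i j X = inflow_scale i j X"
  by (auto simp: lmove_def inflow_scale_def ext_entry_def)

lemma ext_entry_nonneg: "positive_on n m X \<Longrightarrow> i \<le> n \<Longrightarrow> j \<le> m \<Longrightarrow> ext_entry X i j \<ge> 0"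
  by (auto simp: ext_entry_def positive_on_def less_imp_le)

lemma energy_term_cong:
  assumes "\<And>p q. (p, q) \<noteq> (r, s) \<Longrightarrow> Z1 p q = Z2 p q"
    and "(p, q) \<noteq> (r, s)" "(p, q) \<noteq> (r, Suc s)" "(p, q) \<noteq> (Suc r, s)"
  shows "energy_term Q Z1 p q = energy_term Q Z2 p q"
proof -
  have "ext_entry Z1 (p - 1) q = ext_entry Z2 (p - 1) q"
    using assms by (cases p) (auto simp: ext_entry_def)
  moreover have "ext_entry Z1 p (q - 1) = ext_entry Z2 p (q - 1)"
    using assms by (cases q) (auto simp: ext_entry_def)
  ultimately show ?thesis
    using assms by (simp add: energy_term_def local_energy_def)
qed

lemma sum_diff_eq_sum_diff_subset:
  fixes f g :: "'a \<Rightarrow> 'b::ab_group_add"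
  assumes "finite G" "A \<subseteq> G" "\<And>x. x \<in> G - A \<Longrightarrow> f x = g x"
  shows "sum f G - sum g G = sum f A - sum g A"
proof -
  have "sum f (G - A) = sum g (G - A)"
    using assms by (intro sum.cong) auto
  then show ?thesis
    using assms by (simp add: sum.subset_diff)
qed

text \<open>The local identity behind the invariance: \<open>l\<^sub>i\<^sub>j\<close> replaces \<open>a\<close> by \<open>a' = bc / (ab + ac)\<close>,
  and \<open>k\<close>, \<open>u\<close>, \<open>l\<close> are the inflows into the three affected cells from outside.\<close>

lemma lmove_energy_identity:
  fixes a b c k u l a' :: real
  assumes "a > 0" "b > 0" "c > 0" "k > 0" and a': "a' = b * c / (a * b + a * c)"
  shows "k / (k * a') + (u + k * a') / b + (k * a' + l) / c = k / a + (u + a) / b + (a + l) / c"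
proof -
  have a'_eq: "a' = b * c / (a * (b + c))"
    unfolding a' by (simp add: algebra_simps)
  have "a' > 0"
    unfolding a'_eq using assms by simp
  have inv: "1 / a' = a / b + a / c"
    unfolding a'_eq using assms by (simp add: field_simps)
  have sum: "a' / b + a' / c = 1 / a"
    unfolding a'_eq using assms by (simp add: divide_simps)
  have "k / (k * a') + (u + k * a') / b + (k * a' + l) / c
      = 1 / a' + u / b + l / c + k * (a' / b + a' / c)"
    using \<open>a' > 0\<close> assms(1-4) by (simp add: field_simps)
  also have "\<dots> = k / a + (u + a) / b + (a + l) / c"
    unfolding inv sum using assms(1-4) by (simp add: field_simps)
  finally show ?thesis .
qed

lemma inflow_positive:
  assumes X: "positive_on n m X" and "1 \<le> i" "i \<le> n" "1 \<le> j" "j \<le> m"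
  shows "ext_entry X (i - 1) j + ext_entry X i (j - 1) > 0"
proof (cases "i = 1")
  case True
  then show ?thesis
    using assms by (cases "j = 1") (auto simp: ext_entry_def intro!: positive_onD[OF X])
next
  case False
  then have "X (i - 1) j > 0"
    using assms by (intro positive_onD[OF X]) auto
  moreover have "ext_entry X i (j - 1) \<ge> 0"
    using assms by (intro ext_entry_nonneg[OF X]) auto
  ultimately show ?thesis
    using False assms by (simp add: ext_entry_def)
qed

lemma local_energy_inflow_scale:
  assumes "positive_on n m X" "1 \<le> i" "i \<le> n" "1 \<le> j" "j \<le> m"
  shows "local_energy (inflow_scale i j X) i j = 1 / X i j"
proof -
  have "X i j > 0"
    using assms by (intro positive_onD)
  moreover have "ext_entry (inflow_scale i j X) (i - 1) j = ext_entry X (i - 1) j"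
    "ext_entry (inflow_scale i j X) i (j - 1) = ext_entry X i (j - 1)"
    using assms by (auto simp: ext_entry_def inflow_scale_def mupd_def)
  ultimately show ?thesis
    using inflow_positive[OF assms] by (simp add: local_energy_def inflow_scale_def mupd_def)
qed

lemma inflow_scale_lmove:
  fixes i j :: nat and X :: mat
  defines "a \<equiv> X (Suc i) (Suc j)" and "b \<equiv> X (Suc i) (Suc (Suc j))" and "c \<equiv> X (Suc (Suc i)) (Suc j)"
    and "k \<equiv> ext_entry X i (Suc j) + ext_entry X (Suc i) j"
  shows "inflow_scale (Suc i) (Suc j) (lmove (Suc (Suc i)) (Suc (Suc j)) X)
       = mupd (inflow_scale (Suc (Suc i)) (Suc (Suc j)) X) (Suc i) (Suc j) (k * (b * c / (a * b + a * c)))"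
  by (auto simp: inflow_scale_def lmove_def Let_def mupd_def ext_entry_def a_def b_def c_def k_def
      fun_eq_iff algebra_simps add_divide_distrib)

lemma mixed_energy_inflow_scale_lmove:
  assumes X: "positive_on n m X" and i: "Suc (Suc i) \<le> n" and j: "Suc (Suc j) \<le> m"
    and Q: "Q (Suc i) (Suc j)" "Q (Suc i) (Suc (Suc j))" "Q (Suc (Suc i)) (Suc j)"
  shows "mixed_energy n m Q (inflow_scale (Suc i) (Suc j) (lmove (Suc (Suc i)) (Suc (Suc j)) X))
       = mixed_energy n m Q (inflow_scale (Suc (Suc i)) (Suc (Suc j)) X)"
proof -
  define a b c where "a = X (Suc i) (Suc j)" "b = X (Suc i) (Suc (Suc j))" "c = X (Suc (Suc i)) (Suc j)"
  define k u l where "k = ext_entry X i (Suc j) + ext_entry X (Suc i) j"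
    "u = ext_entry X i (Suc (Suc j))" "l = ext_entry X (Suc (Suc i)) j"
  define a' where "a' = b * c / (a * b + a * c)"
  define Z where "Z = inflow_scale (Suc (Suc i)) (Suc (Suc j)) X"
  define Z' where "Z' = mupd Z (Suc i) (Suc j) (k * a')"
  have Z: "Z p q = (if p = Suc (Suc i) \<and> q = Suc (Suc j) then (b + c) * X p q else X p q)" for p q
    by (simp add: Z_def inflow_scale_def mupd_def ext_entry_def a_b_c_def)
  have "a > 0" "b > 0" "c > 0"
    using i j by (auto simp: a_b_c_def intro!: positive_onD[OF X])
  have "k > 0"
    using inflow_positive[OF X, of "Suc i" "Suc j"] i j by (simp add: k_u_l_def)
  let ?A = "{(Suc i, Suc j), (Suc i, Suc (Suc j)), (Suc (Suc i), Suc j)}"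
  have "mixed_energy n m Q Z' - mixed_energy n m Q Z
      = (\<Sum>(p, q)\<in>?A. energy_term Q Z' p q) - (\<Sum>(p, q)\<in>?A. energy_term Q Z p q)"
    unfolding mixed_energy_def
  proof (rule sum_diff_eq_sum_diff_subset)
    have agree: "Z' p q = Z p q" if "(p, q) \<noteq> (Suc i, Suc j)" for p q
      using that by (auto simp: Z'_def mupd_def)
    show "(case x of (p, q) \<Rightarrow> energy_term Q Z' p q) = (case x of (p, q) \<Rightarrow> energy_term Q Z p q)"
      if "x \<in> {1..n} \<times> {1..m} - ?A" for x
      using that by (cases x) (auto intro!: energy_term_cong[where r = "Suc i" and s = "Suc j"] agree)
  qed (use i j in auto)
  also have "\<dots> = (k / (k * a') + (u + k * a') / b + (k * a' + l) / c) - (k / a + (u + a) / b + (a + l) / c)"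
    by (simp add: energy_term_def local_energy_def Q Z Z'_def mupd_def ext_entry_def a_b_c_def k_u_l_def)
  also have "\<dots> = 0"
    using lmove_energy_identity[OF \<open>a > 0\<close> \<open>b > 0\<close> \<open>c > 0\<close> \<open>k > 0\<close> a'_def] by simp
  finally show ?thesis
    using inflow_scale_lmove[of i j X] by (simp add: Z'_def Z_def a'_def a_b_c_def k_u_l_def)
qed

lemma diag_chain_border: "1 \<le> i \<Longrightarrow> 1 \<le> j \<Longrightarrow> i = 1 \<or> j = 1 \<Longrightarrow> diag_chain i j = lmove i j"
  by (cases i; cases j) auto

lemma mixed_energy_diag_chain:
  assumes "positive_on n m X" "1 \<le> i" "i \<le> n" "1 \<le> j" "j \<le> m"
    and "\<And>i' j'. i' < i \<or> (i' = i \<and> j' < j) \<Longrightarrow> Q i' j'"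
  shows "mixed_energy n m Q (diag_chain i j X) = mixed_energy n m Q (inflow_scale i j X)"
  using assms
proof (induction i arbitrary: j X)
  case (Suc i)
  show ?case
  proof (cases "Suc i = 1 \<or> j = 1")
    case True
    then show ?thesis
      using Suc.prems by (simp add: diag_chain_border lmove_border_eq_inflow_scale)
  next
    case False
    then obtain i0 j0 where ij: "i = Suc i0" "j = Suc (Suc j0)"
      using Suc.prems by (metis One_nat_def Suc_le_D not0_implies_Suc)
    have "positive_on n m (lmove (Suc i) j X)"
      using Suc.prems by (intro positive_on_lmove) auto
    then have "mixed_energy n m Q (diag_chain i (Suc j0) (lmove (Suc i) j X))
        = mixed_energy n m Q (inflow_scale i (Suc j0) (lmove (Suc i) j X))"
      using Suc.prems ij by (intro Suc.IH) auto
    also have "\<dots> = mixed_energy n m Q (inflow_scale (Suc i) j X)"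
      using Suc.prems ij by (simp add: mixed_energy_inflow_scale_lmove)
    finally show ?thesis
      using ij by simp
  qed
qed simp

definition processed :: "nat \<Rightarrow> nat \<Rightarrow> nat \<Rightarrow> nat \<Rightarrow> bool" where
  "processed k j i' j' \<longleftrightarrow> i' < k \<or> (i' = k \<and> j' \<le> j)"

lemma mixed_energy_diag_chain_processed:
  assumes X: "positive_on n m X" and k: "1 \<le> k" "k \<le> n" and j: "Suc j \<le> m"
  shows "mixed_energy n m (processed k (Suc j)) (diag_chain k (Suc j) X) = mixed_energy n m (processed k j) X"
proof -
  let ?Z = "inflow_scale k (Suc j) X"
  have agree: "?Z p q = X p q" if "(p, q) \<noteq> (k, Suc j)" for p q
    using that by (auto simp: inflow_scale_def mupd_def)
  have "energy_term (processed k (Suc j)) ?Z p q = energy_term (processed k j) X p q"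
    if "(p, q) \<in> {1..n} \<times> {1..m}" for p q
  proof -
    consider "(p, q) = (k, Suc j)" | "(p, q) = (k, Suc (Suc j)) \<or> (p, q) = (Suc k, Suc j)"
      | "(p, q) \<noteq> (k, Suc j)" "(p, q) \<noteq> (k, Suc (Suc j))" "(p, q) \<noteq> (Suc k, Suc j)"
      by blast
    then show ?thesis
    proof cases
      case 1
      then show ?thesis
        using local_energy_inflow_scale[OF X k, of "Suc j"] j by (simp add: energy_term_def processed_def)
    next
      case 2
      then show ?thesis
        by (auto simp: energy_term_def processed_def agree)
    next
      case 3
      then have "energy_term (processed k (Suc j)) ?Z p q = energy_term (processed k (Suc j)) X p q"
        by (intro energy_term_cong[where r = k and s = "Suc j"] agree)
      then show ?thesis
        using 3 by (auto simp: energy_term_def processed_def)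
    qed
  qed
  then have "mixed_energy n m (processed k (Suc j)) ?Z = mixed_energy n m (processed k j) X"
    unfolding mixed_energy_def by (intro sum.cong) auto
  moreover have "mixed_energy n m (processed k (Suc j)) (diag_chain k (Suc j) X)
      = mixed_energy n m (processed k (Suc j)) ?Z"
    using assms by (intro mixed_energy_diag_chain) (auto simp: processed_def)
  ultimately show ?thesis by simp
qed

lemma mixed_energy_pi_cascade:
  "positive_on n m X \<Longrightarrow> 1 \<le> k \<Longrightarrow> k \<le> n \<Longrightarrow> c \<le> m
    \<Longrightarrow> mixed_energy n m (processed k c) (pi_cascade k c X) = mixed_energy n m (processed k 0) X"
  by (induction c)
    (simp_all add: pi_cascade_Suc mixed_energy_diag_chain_processed positive_on_pi_cascade)

lemma mixed_energy_cong:
  "(\<And>i j. 1 \<le> i \<Longrightarrow> i \<le> n \<Longrightarrow> 1 \<le> j \<Longrightarrow> j \<le> m \<Longrightarrow> Q i j = Q' i j)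
    \<Longrightarrow> mixed_energy n m Q X = mixed_energy n m Q' X"
  unfolding mixed_energy_def energy_term_def by (intro sum.cong) auto

lemma mixed_energy_rsk_R:
  assumes "positive_on n m X" "1 \<le> k" "k \<le> n"
  shows "mixed_energy n m (processed (Suc k) 0) (rsk_R m k X) = mixed_energy n m (processed k 0) X"
proof -
  have "mixed_energy n m (processed (Suc k) 0) Y = mixed_energy n m (processed k m) Y" for Y
    by (intro mixed_energy_cong) (auto simp: processed_def)
  then show ?thesis
    using mixed_energy_pi_cascade[OF assms, of m] by (simp add: rsk_R_eq_pi_cascade)
qed

lemma mixed_energy_fold_rsk_R:
  "positive_on n m X \<Longrightarrow> k \<le> n
    \<Longrightarrow> mixed_energy n m (processed (Suc k) 0) (fold (rsk_R m) [1..<k + 1] X)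
      = mixed_energy n m (processed 1 0) X"
proof (induction k)
  case (Suc k)
  let ?Y = "fold (rsk_R m) [1..<k + 1] X"
  have "fold (rsk_R m) [1..<Suc k + 1] X = rsk_R m (Suc k) ?Y"
    by simp
  moreover have "positive_on n m ?Y"
    using Suc.prems by (intro positive_on_fold_rsk_R) auto
  ultimately show ?case
    using Suc mixed_energy_rsk_R[of n m ?Y "Suc k"] by simp
qed simp

lemma sum_local_energy_rsk_T:
  assumes "positive_on n m W"
  shows "(\<Sum>(i, j)\<in>{1..n} \<times> {1..m}. local_energy (rsk_T n m W) i j)
    = (\<Sum>(i, j)\<in>{1..n} \<times> {1..m}. 1 / W i j)"
proof -
  have "mixed_energy n m (processed (Suc n) 0) Y = (\<Sum>(i, j)\<in>{1..n} \<times> {1..m}. local_energy Y i j)"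
    and "mixed_energy n m (processed 1 0) Y = (\<Sum>(i, j)\<in>{1..n} \<times> {1..m}. 1 / Y i j)" for Y
    unfolding mixed_energy_def energy_term_def processed_def by (auto intro!: sum.cong)
  then show ?thesis
    using mixed_energy_fold_rsk_R[OF assms, of n] by (simp add: rsk_T_def)
qed

section \<open>Rescaling the antidiagonal\<close>

definition rescale :: "real \<Rightarrow> (nat \<Rightarrow> nat \<Rightarrow> real) \<Rightarrow> mat \<Rightarrow> mat" where
  "rescale r f X = (\<lambda>p q. r powr f p q * X p q)"

definition lmove_exp :: "nat \<Rightarrow> nat \<Rightarrow> (nat \<Rightarrow> nat \<Rightarrow> real) \<Rightarrow> (nat \<Rightarrow> nat \<Rightarrow> real)" where
  "lmove_exp i j f = (if i = 1 \<and> j = 1 then f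
     else if j = 1 then mupd f i 1 (f (i - 1) 1 + f i 1)
     else if i = 1 then mupd f 1 j (f 1 (j - 1) + f 1 j)
     else mupd (mupd f (i - 1) (j - 1) (f i (j - 1) - f (i - 1) (j - 1))) i j (f i j + f (i - 1) j))"

lemma lmove_ratio_rescale:
  fixes P A a b c :: real
  assumes "P > 0" "A > 0"
  shows "(P * b) * (P * c) / ((A * a) * (P * b) + (A * a) * (P * c)) = (P / A) * (b * c / (a * b + a * c))"
proof -
  have "(A * a) * (P * b) + (A * a) * (P * c) = (A * P) * (a * b + a * c)"
    by (simp add: algebra_simps)
  moreover have "(P * b) * (P * c) = (A * P) * ((P / A) * (b * c))"
    using assms by (simp add: field_simps)
  ultimately show ?thesis
    using assms by (simp add: mult_divide_mult_cancel_left_if)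
qed

lemma lmove_rescale_interior:
  assumes r: "r > 0" and ij: "2 \<le> i" "2 \<le> j" and f: "f (i - 1) j = f i (j - 1)"
  shows "lmove i j (rescale r f X) = rescale r (lmove_exp i j f) (lmove i j X)"
proof (intro ext)
  fix p q
  define P A where "P = r powr f i (j - 1)" and "A = r powr f (i - 1) (j - 1)"
  have "P > 0" "A > 0"
    unfolding P_def A_def using r by auto
  have f': "f (i - Suc 0) j = f i (j - Suc 0)"
    using f by simp
  have L: "lmove i j Z = mupd (mupd Z (i - 1) (j - 1)
      (Z (i - 1) j * Z i (j - 1) / (Z (i - 1) (j - 1) * Z (i - 1) j + Z (i - 1) (j - 1) * Z i (j - 1))))
      i j (Z i j * (Z (i - 1) j + Z i (j - 1)))" for Z
    using ij by (simp add: lmove_def Let_def)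
  have E: "lmove_exp i j f = mupd (mupd f (i - 1) (j - 1) (f i (j - 1) - f (i - 1) (j - 1))) i j (f i j + f (i - 1) j)"
    using ij by (simp add: lmove_exp_def)
  consider "p = i - 1" "q = j - 1" | "p = i" "q = j" | "(p, q) \<noteq> (i - 1, j - 1)" "(p, q) \<noteq> (i, j)"
    by blast
  then show "lmove i j (rescale r f X) p q = rescale r (lmove_exp i j f) (lmove i j X) p q"
  proof cases
    case 1
    then have "p \<noteq> i"
      using ij by auto
    with 1 have "lmove i j (rescale r f X) p q = (P * X (i - 1) j) * (P * X i (j - 1)) /
        ((A * X (i - 1) (j - 1)) * (P * X (i - 1) j) + (A * X (i - 1) (j - 1)) * (P * X i (j - 1)))"
      by (simp add: L mupd_def rescale_def P_def A_def f')
    also have "\<dots> = (P / A) * (X (i - 1) j * X i (j - 1)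
        / (X (i - 1) (j - 1) * X (i - 1) j + X (i - 1) (j - 1) * X i (j - 1)))"
      using \<open>P > 0\<close> \<open>A > 0\<close> by (rule lmove_ratio_rescale)
    also have "\<dots> = rescale r (lmove_exp i j f) (lmove i j X) p q"
      using 1 \<open>p \<noteq> i\<close> by (simp add: L E mupd_def rescale_def P_def A_def powr_diff)
    finally show ?thesis .
  next
    case 2
    then show ?thesis
      using ij by (simp add: L E mupd_def rescale_def powr_add f' algebra_simps)
  next
    case 3
    then show ?thesis
      by (auto simp: L E mupd_def rescale_def)
  qed
qed

lemma lmove_rescale:
  assumes "r > 0" "1 \<le> i" "1 \<le> j" "2 \<le> i \<Longrightarrow> 2 \<le> j \<Longrightarrow> f (i - 1) j = f i (j - 1)"
  shows "lmove i j (rescale r f X) = rescale r (lmove_exp i j f) (lmove i j X)"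
proof (cases "2 \<le> i \<and> 2 \<le> j")
  case True
  then show ?thesis
    using assms by (intro lmove_rescale_interior) auto
next
  case False
  then have "i = 1 \<or> j = 1"
    using assms by auto
  then show ?thesis
    by (auto simp: lmove_def lmove_exp_def rescale_def mupd_def powr_add fun_eq_iff)
qed

definition rsk_pi_exp :: "nat \<Rightarrow> nat \<Rightarrow> (nat \<Rightarrow> nat \<Rightarrow> real) \<Rightarrow> (nat \<Rightarrow> nat \<Rightarrow> real)" where
  "rsk_pi_exp i J f = (\<lambda>p q. if p = i \<and> 1 \<le> q \<and> q \<le> J then f i q + f (i - 1) q
      else if p = i - 1 \<and> 1 \<le> q \<and> q < J then f i q else f p q)"

definition rsk_pi_exp_row1 :: "nat \<Rightarrow> (nat \<Rightarrow> nat \<Rightarrow> real) \<Rightarrow> (nat \<Rightarrow> nat \<Rightarrow> real)" where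
  "rsk_pi_exp_row1 J f = (\<lambda>p q. if p = 1 \<and> 1 \<le> q \<and> q \<le> J then (\<Sum>t=1..q. f 1 t) else f p q)"

lemma rsk_pi_rescale:
  assumes r: "r > 0" and i: "2 \<le> i"
    and f: "\<And>q. 2 \<le> q \<Longrightarrow> q \<le> J \<Longrightarrow> f (i - 1) q = f i (q - 1) + f (i - 1) (q - 1)"
  shows "rsk_pi i J (rescale r f X) = rescale r (rsk_pi_exp i J f) (rsk_pi i J X)"
  using f
proof (induction J)
  case 0
  have "rsk_pi_exp i 0 f = f" by (auto simp: rsk_pi_exp_def fun_eq_iff)
  then show ?case by simp
next
  case (Suc J)
  have IH: "rsk_pi i J (rescale r f X) = rescale r (rsk_pi_exp i J f) (rsk_pi i J X)"
    using Suc by auto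
  have same_exp: "rsk_pi_exp i J f (i - 1) (Suc J) = rsk_pi_exp i J f i (Suc J - 1)" if "2 \<le> Suc J"
  proof -
    have "rsk_pi_exp i J f (i - 1) (Suc J) = f (i - 1) (Suc J)" using i by (simp add: rsk_pi_exp_def)
    also have "\<dots> = f i J + f (i - 1) J" using Suc.prems[of "Suc J"] that by simp
    also have "\<dots> = rsk_pi_exp i J f i (Suc J - 1)" using that by (simp add: rsk_pi_exp_def)
    finally show ?thesis .
  qed
  have "rsk_pi i (Suc J) (rescale r f X) = lmove i (Suc J) (rescale r (rsk_pi_exp i J f) (rsk_pi i J X))"
    by (simp add: IH)
  also have "\<dots> = rescale r (lmove_exp i (Suc J) (rsk_pi_exp i J f)) (lmove i (Suc J) (rsk_pi i J X))"
    using r i same_exp by (intro lmove_rescale) auto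
  also have "lmove_exp i (Suc J) (rsk_pi_exp i J f) = rsk_pi_exp i (Suc J) f"
    using i by (cases J) (auto simp: lmove_exp_def rsk_pi_exp_def mupd_def fun_eq_iff)
  finally show ?case by simp
qed

lemma rsk_pi_row1_rescale:
  "r > 0 \<Longrightarrow> rsk_pi 1 J (rescale r f X) = rescale r (rsk_pi_exp_row1 J f) (rsk_pi 1 J X)"
proof (induction J)
  case 0
  have "rsk_pi_exp_row1 0 f = f" by (auto simp: rsk_pi_exp_row1_def fun_eq_iff)
  then show ?case by simp
next
  case (Suc J)
  have "rsk_pi 1 (Suc J) (rescale r f X) = lmove 1 (Suc J) (rescale r (rsk_pi_exp_row1 J f) (rsk_pi 1 J X))"
    using Suc by simp
  also have "\<dots> = rescale r (lmove_exp 1 (Suc J) (rsk_pi_exp_row1 J f)) (lmove 1 (Suc J) (rsk_pi 1 J X))"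
    using Suc.prems by (intro lmove_rescale) auto
  also have "lmove_exp 1 (Suc J) (rsk_pi_exp_row1 J f) = rsk_pi_exp_row1 (Suc J) f"
    by (cases J) (auto simp: lmove_exp_def rsk_pi_exp_row1_def mupd_def fun_eq_iff add.commute)
  finally show ?case by simp
qed

text \<open>With \<open>c = min n m + 1\<close>, the exponent \<open>1\<close> on the antidiagonal \<open>p + q = c\<close> is transported by
  \<open>R\<^sub>1, \<dots>, R\<^sub>k\<close> to \<open>stage_exp n m c k\<close>, in which the first \<open>k\<close> rows carry \<open>1\<close> from column
  \<open>c - k\<close> on; within \<open>R\<^sub>k\<close>, after \<open>\<pi>\<^sub>k, \<dots>, \<pi>\<^sub>i\<^sub>+\<^sub>1\<close>, it is \<open>cascade_exp n m c k i\<close>. As \<open>c \<le> n + 1\<close>,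
  \<open>stage_exp n m c n\<close> is \<open>1\<close> on the whole grid.\<close>

definition stage_exp :: "nat \<Rightarrow> nat \<Rightarrow> nat \<Rightarrow> nat \<Rightarrow> (nat \<Rightarrow> nat \<Rightarrow> real)" where
  "stage_exp n m c k = (\<lambda>p q. if 1 \<le> p \<and> p \<le> n \<and> 1 \<le> q \<and> q \<le> m then
      (if p \<le> k then (if c \<le> q + k then 1 else 0) else (if p + q = c then 1 else 0)) else 0)"

definition cascade_exp :: "nat \<Rightarrow> nat \<Rightarrow> nat \<Rightarrow> nat \<Rightarrow> nat \<Rightarrow> (nat \<Rightarrow> nat \<Rightarrow> real)" where
  "cascade_exp n m c k i = (\<lambda>p q. if 1 \<le> p \<and> p \<le> n \<and> 1 \<le> q \<and> q \<le> m then
      (if k < p then (if p + q = c then 1 else 0)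
       else if i < p then (if c \<le> q + k then 1 else 0)
       else if p = i then (if q + k \<le> m + i then (if k + q = c then 1 else 0) else 1)
       else (if c + 1 \<le> q + k then 1 else 0)) else 0)"

lemma rsk_pi_exp_cascade_exp:
  assumes "2 \<le> i" "i \<le> k" "k \<le> n" "c \<le> m + 1"
  shows "rsk_pi_exp i (m + i - k) (cascade_exp n m c k i) = cascade_exp n m c k (i - 1)"
  using assms by (auto simp: rsk_pi_exp_def cascade_exp_def fun_eq_iff)

lemma cascade_exp_compatible:
  assumes "2 \<le> i" "i \<le> k" "k \<le> n" "c \<le> m + 1" "2 \<le> q" "q \<le> m + i - k"
  shows "cascade_exp n m c k i (i - 1) q
    = cascade_exp n m c k i i (q - 1) + cascade_exp n m c k i (i - 1) (q - 1)"
  using assms by (auto simp: cascade_exp_def)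

lemma sum_indicator_shift:
  fixes q k c :: nat
  assumes "k + 1 \<le> c"
  shows "(\<Sum>t=1..q. (if k + t = c then 1 else 0 :: real)) = (if c \<le> q + k then 1 else 0)"
  using assms by (induction q) auto

lemma cascade_exp_0: "cascade_exp n m c k 0 = stage_exp n m c k"
  by (auto simp: cascade_exp_def stage_exp_def fun_eq_iff)

lemma cascade_exp_top: "1 \<le> k \<Longrightarrow> cascade_exp n m c k k = stage_exp n m c (k - 1)"
  by (auto simp: cascade_exp_def stage_exp_def fun_eq_iff)

lemma rsk_pi_exp_row1_cascade_exp:
  assumes "1 \<le> k" "k \<le> n" "c = min n m + 1"
  shows "rsk_pi_exp_row1 (m + 1 - k) (cascade_exp n m c k 1) = cascade_exp n m c k 0"
proof (intro ext)
  fix p q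
  show "rsk_pi_exp_row1 (m + 1 - k) (cascade_exp n m c k 1) p q = cascade_exp n m c k 0 p q"
  proof (cases "p = 1 \<and> 1 \<le> q \<and> q \<le> m + 1 - k")
    case True
    then have km: "k \<le> m" "k + 1 \<le> c" "q \<le> m" using assms by auto
    have "(\<Sum>t=1..q. cascade_exp n m c k 1 1 t) = (\<Sum>t=1..q. (if k + t = c then 1 else 0 :: real))"
      using True assms by (intro sum.cong) (auto simp: cascade_exp_def)
    also have "\<dots> = (if c \<le> q + k then 1 else 0)" by (rule sum_indicator_shift[OF km(2)])
    moreover have "rsk_pi_exp_row1 (m + 1 - k) (cascade_exp n m c k 1) p q = (\<Sum>t=1..q. cascade_exp n m c k 1 1 t)"
      using True by (simp add: rsk_pi_exp_row1_def)
    moreover have "cascade_exp n m c k 0 p q = (if c \<le> q + k then 1 else 0)"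
      using True assms km by (simp add: cascade_exp_def)
    ultimately show ?thesis by simp
  next
    case False
    then show ?thesis using assms by (auto simp: rsk_pi_exp_row1_def cascade_exp_def)
  qed
qed

lemma pi_cascade_rescale:
  assumes "r > 0" "i \<le> k" "1 \<le> k" "k \<le> n" "c = min n m + 1"
  shows "pi_cascade i (m + i - k) (rescale r (cascade_exp n m c k i) X)
    = rescale r (stage_exp n m c k) (pi_cascade i (m + i - k) X)"
  using assms
proof (induction i arbitrary: X)
  case 0 then show ?case by (simp add: cascade_exp_0)
next
  case (Suc i)
  have cascade_Suc:
    "pi_cascade (Suc i) (m + Suc i - k) Y = pi_cascade i (m + i - k) (rsk_pi (Suc i) (m + Suc i - k) Y)" for Y
    by simp
  show ?case
  proof (cases i)
    case 0
    have "rsk_pi 1 (m + 1 - k) (rescale r (cascade_exp n m c k 1) X)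
        = rescale r (cascade_exp n m c k 0) (rsk_pi 1 (m + 1 - k) X)"
      using rsk_pi_row1_rescale[of r "m + 1 - k" "cascade_exp n m c k 1" X]
        rsk_pi_exp_row1_cascade_exp[OF Suc.prems(3-5)] Suc.prems(1)
      by simp
    then show ?thesis using 0 by (simp add: cascade_exp_0)
  next
    case (Suc i')
    have pi: "rsk_pi (Suc i) (m + Suc i - k) (rescale r (cascade_exp n m c k (Suc i)) X)
        = rescale r (cascade_exp n m c k i) (rsk_pi (Suc i) (m + Suc i - k) X)"
    proof -
      have "rsk_pi (Suc i) (m + Suc i - k) (rescale r (cascade_exp n m c k (Suc i)) X)
          = rescale r (rsk_pi_exp (Suc i) (m + Suc i - k) (cascade_exp n m c k (Suc i))) (rsk_pi (Suc i) (m + Suc i - k) X)"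
        using Suc Suc.prems by (intro rsk_pi_rescale cascade_exp_compatible) auto
      also have "rsk_pi_exp (Suc i) (m + Suc i - k) (cascade_exp n m c k (Suc i)) = cascade_exp n m c k i"
        using rsk_pi_exp_cascade_exp[of "Suc i" k n c m] Suc Suc.prems by simp
      finally show ?thesis .
    qed
    show ?thesis
      unfolding cascade_Suc pi using Suc.IH[of "rsk_pi (Suc i) (m + Suc i - k) X"] Suc.prems by simp
  qed
qed

lemma rsk_R_rescale:
  assumes "r > 0" "1 \<le> k" "k \<le> n" "c = min n m + 1"
  shows "rsk_R m k (rescale r (stage_exp n m c (k - 1)) X) = rescale r (stage_exp n m c k) (rsk_R m k X)"
  using pi_cascade_rescale[of r k k n c m X] assms by (simp add: rsk_R_eq_pi_cascade cascade_exp_top)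

lemma fold_rsk_R_rescale:
  assumes "r > 0" "k \<le> n" "c = min n m + 1"
  shows "fold (rsk_R m) [1..<k + 1] (rescale r (stage_exp n m c 0) W)
    = rescale r (stage_exp n m c k) (fold (rsk_R m) [1..<k + 1] W)"
  using assms
proof (induction k)
  case 0 then show ?case by simp
next
  case (Suc k)
  have "fold (rsk_R m) [1..<Suc k + 1] (rescale r (stage_exp n m c 0) W)
      = rsk_R m (Suc k) (rescale r (stage_exp n m c k) (fold (rsk_R m) [1..<k + 1] W))"
    using Suc by simp
  also have "\<dots> = rescale r (stage_exp n m c (Suc k)) (rsk_R m (Suc k) (fold (rsk_R m) [1..<k + 1] W))"
    using rsk_R_rescale[of r "Suc k" n c m] Suc.prems by simp
  finally show ?case by simp
qed

lemma rsk_T_rescale_antidiagonal: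
  assumes "r > 0" "1 \<le> a" "a \<le> n" "1 \<le> b" "b \<le> m"
  shows "rsk_T n m (\<lambda>p q. if 0 < p \<and> 0 < q \<and> p + q = min n m + 1 then r * W p q else W p q) a b
    = r * rsk_T n m W a b"
proof -
  let ?c = "min n m + 1"
  have "(\<lambda>p q. if 0 < p \<and> 0 < q \<and> p + q = ?c then r * W p q else W p q) = rescale r (stage_exp n m ?c 0) W"
    using \<open>r > 0\<close> by (auto simp: rescale_def stage_exp_def fun_eq_iff)
  moreover have "stage_exp n m ?c n a b = 1"
    using assms by (simp add: stage_exp_def)
  ultimately show ?thesis
    using fold_rsk_R_rescale[of r n n ?c m W] assms by (simp add: rsk_T_def rescale_def)
qed

section \<open>The corner entry and the energy\<close>

lemma sum_grid_split_antidiagonal: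
  fixes n m :: nat and f :: "nat \<Rightarrow> nat \<Rightarrow> 'a::comm_monoid_add"
  defines "p \<equiv> min n m"
  shows "(\<Sum>(i, j)\<in>{1..n} \<times> {1..m}. f i j)
    = (\<Sum>i\<in>{1..p}. f i (p + 1 - i))
      + (\<Sum>(i, j)\<in>{(i, j). 1 \<le> i \<and> i \<le> n \<and> 1 \<le> j \<and> j \<le> m \<and> i + j \<noteq> p + 1}. f i j)"
proof -
  let ?G = "{1..n} \<times> {1..m}" and ?D = "(\<lambda>i. (i, p + 1 - i)) ` {1..p}"
  have "?D \<subseteq> ?G"
    by (auto simp: p_def)
  moreover have "?G - ?D = {(i, j). 1 \<le> i \<and> i \<le> n \<and> 1 \<le> j \<and> j \<le> m \<and> i + j \<noteq> p + 1}"
    by (auto simp: p_def image_iff)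
  moreover have "(\<Sum>(i, j)\<in>?D. f i j) = (\<Sum>i\<in>{1..p}. f i (p + 1 - i))"
    by (subst sum.reindex) (auto simp: inj_on_def)
  ultimately show ?thesis
    by (simp add: sum.subset_diff add.commute)
qed

lemma local_energy_rescaled:
  assumes "\<And>p q. 1 \<le> p \<Longrightarrow> p \<le> n \<Longrightarrow> 1 \<le> q \<Longrightarrow> q \<le> m \<Longrightarrow> Y' p q = r * Y p q" and "r \<noteq> 0"
    and "1 \<le> a" "a \<le> n" "1 \<le> b" "b \<le> m" "(a, b) \<noteq> (1, 1)"
  shows "local_energy Y' a b = local_energy Y a b"
proof -
  have "ext_entry Y' (a - 1) b = r * ext_entry Y (a - 1) b" "ext_entry Y' a (b - 1) = r * ext_entry Y a (b - 1)"
    using assms by (auto simp: ext_entry_def)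
  then show ?thesis
    using assms by (simp add: local_energy_def distrib_left[symmetric])
qed

lemma rsk_T_corner:
  fixes n m :: nat and W :: mat
  assumes n: "1 \<le> n" and m: "1 \<le> m" and W: "positive_on n m W"
  defines "p \<equiv> min n m"
  shows "1 / rsk_T n m W 1 1 = (\<Sum>i\<in>{1..p}. 1 / W i (p + 1 - i))"
proof -
  let ?G = "{1..n} \<times> {1..m}"
  define W' where "W' = (\<lambda>i j. if 0 < i \<and> 0 < j \<and> i + j = p + 1 then 2 * W i j else W i j)"
  define Y Y' where "Y = rsk_T n m W" and "Y' = rsk_T n m W'"
  define diag where "diag = (\<Sum>i\<in>{1..p}. 1 / W i (p + 1 - i))"
  have "positive_on n m W'"
    using W by (auto simp: positive_on_def W'_def)
  have Y': "Y' a b = 2 * Y a b" if "1 \<le> a" "a \<le> n" "1 \<le> b" "b \<le> m" for a b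
    using rsk_T_rescale_antidiagonal[of 2 a n b m W] that by (simp add: Y_def Y'_def W'_def p_def)
  have "Y 1 1 > 0"
    using positive_on_rsk_T[OF W] n m by (auto simp: Y_def intro: positive_onD)
  have "(\<Sum>(i, j)\<in>?G. local_energy Y' i j) - (\<Sum>(i, j)\<in>?G. local_energy Y i j)
      = (\<Sum>(i, j)\<in>{(1, 1)}. local_energy Y' i j) - (\<Sum>(i, j)\<in>{(1, 1)}. local_energy Y i j)"
    using n m by (intro sum_diff_eq_sum_diff_subset) (auto intro!: local_energy_rescaled[of n m Y' 2 Y] Y')
  also have "\<dots> = 1 / (2 * Y 1 1) - 1 / Y 1 1"
    using n m by (simp add: local_energy_def ext_entry_def Y')
  finally have "1 / (2 * Y 1 1) - 1 / Y 1 1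
      = (\<Sum>(i, j)\<in>?G. 1 / W' i j) - (\<Sum>(i, j)\<in>?G. 1 / W i j)"
    using sum_local_energy_rsk_T[OF W] sum_local_energy_rsk_T[OF \<open>positive_on n m W'\<close>]
    by (simp add: Y_def Y'_def)
  also have "\<dots> = (\<Sum>i\<in>{1..p}. 1 / W' i (p + 1 - i)) - diag"
  proof -
    let ?Off = "{(i, j). 1 \<le> i \<and> i \<le> n \<and> 1 \<le> j \<and> j \<le> m \<and> i + j \<noteq> p + 1}"
    have "(\<Sum>(i, j)\<in>?Off. 1 / W' i j) = (\<Sum>(i, j)\<in>?Off. 1 / W i j)"
      by (intro sum.cong) (auto simp: W'_def)
    then show ?thesis
      unfolding diag_def sum_grid_split_antidiagonal[of _ n m, folded p_def] by simp
  qed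
  also have "\<dots> = - diag / 2"
  proof -
    have "(\<Sum>i\<in>{1..p}. 1 / W' i (p + 1 - i)) = diag / 2"
      unfolding diag_def sum_divide_distrib by (intro sum.cong) (auto simp: W'_def)
    then show ?thesis by simp
  qed
  finally show ?thesis
    using \<open>Y 1 1 > 0\<close> by (simp add: Y_def diag_def field_simps)
qed

lemma energy_eq_local_energy:
  assumes "1 \<le> n" "1 \<le> m"
  shows "energy n m s X = (s - 1) / X 1 1 + of_real (\<Sum>(i, j)\<in>{1..n} \<times> {1..m}. local_energy X i j)"
proof -
  define x where "x = (\<lambda>i j. if i = 0 \<or> j = 0 then 0 else X i j)"
  define g where "g i j = (x (i - 1) j + x i (j - 1)) / X i j" for i j
  let ?G = "{1..n} \<times> {1..m}"
  have "(\<Sum>(i, j)\<in>?G. local_energy X i j) = (\<Sum>(i, j)\<in>?G. g i j + (if (i, j) = (1, 1) then 1 / X 1 1 else 0))"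
    by (intro sum.cong) (auto simp: local_energy_def ext_entry_def x_def g_def add_divide_distrib)
  also have "\<dots> = (\<Sum>(i, j)\<in>?G. g i j) + (\<Sum>(i, j)\<in>?G. if (i, j) = (1, 1) then 1 / X 1 1 else 0)"
    by (simp only: sum.distrib split_def)
  also have "(\<Sum>(i, j)\<in>?G. if (i, j) = (1, 1) then 1 / X 1 1 else 0) = 1 / X 1 1"
    using assms by (subst sum.remove[of _ "(1, 1)"]) (auto intro!: sum.neutral split: if_splits)
  finally have local: "(\<Sum>(i, j)\<in>?G. local_energy X i j) = (\<Sum>(i, j)\<in>?G. g i j) + 1 / X 1 1" .
  have "energy n m s X = s / X 1 1 + (\<Sum>i\<in>{1..n}. \<Sum>j\<in>{1..m}. complex_of_real (g i j))"
    by (simp add: energy_def Let_def x_def g_def)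
  also have "(\<Sum>i\<in>{1..n}. \<Sum>j\<in>{1..m}. complex_of_real (g i j)) = of_real (\<Sum>(i, j)\<in>?G. g i j)"
    by (simp only: of_real_sum sum.cartesian_product split_def)
  finally have "energy n m s X = s / X 1 1 + of_real (\<Sum>(i, j)\<in>?G. g i j)" .
  then show ?thesis
    unfolding local by (simp del: of_real_sum add: diff_divide_distrib)
qed

theorem theorem3p2:
  fixes n m :: nat and W :: mat and s :: complex
  assumes "n \<ge> 1" and "m \<ge> 1"
    and "\<And>i j. 1 \<le> i \<Longrightarrow> i \<le> n \<Longrightarrow> 1 \<le> j \<Longrightarrow> j \<le> m \<Longrightarrow> W i j > 0"
  shows "(let p = min n m in
            (\<Sum>i\<in>{1..p}. s / complex_of_real (W i (p + 1 - i)))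
          + (\<Sum>(i, j)\<in>{(i, j). 1 \<le> i \<and> i \<le> n \<and> 1 \<le> j \<and> j \<le> m \<and> i + j \<noteq> p + 1}.
               1 / complex_of_real (W i j)))
         = energy n m s (rsk_T n m W)"
proof -
  let ?p = "min n m" and ?T = "rsk_T n m W"
  let ?Off = "{(i, j). 1 \<le> i \<and> i \<le> n \<and> 1 \<le> j \<and> j \<le> m \<and> i + j \<noteq> ?p + 1}"
  have W: "positive_on n m W"
    using assms(3) by (simp add: positive_on_def)
  have diag: "(\<Sum>i\<in>{1..?p}. 1 / W i (?p + 1 - i)) = 1 / ?T 1 1"
    using rsk_T_corner[OF assms(1,2) W] by simp
  have "energy n m s ?T = (s - 1) / ?T 1 1 + of_real (\<Sum>(i, j)\<in>{1..n} \<times> {1..m}. 1 / W i j)"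
    using energy_eq_local_energy[OF assms(1,2)] sum_local_energy_rsk_T[OF W] by (simp del: of_real_sum)
  also have "(\<Sum>(i, j)\<in>{1..n} \<times> {1..m}. 1 / W i j) = 1 / ?T 1 1 + (\<Sum>(i, j)\<in>?Off. 1 / W i j)"
    unfolding sum_grid_split_antidiagonal[of _ n m] diag ..
  finally have energy: "energy n m s ?T = s / ?T 1 1 + of_real (\<Sum>(i, j)\<in>?Off. 1 / W i j)"
    by (simp add: diff_divide_distrib del: of_real_sum)
  have "(\<Sum>i\<in>{1..?p}. s / of_real (W i (?p + 1 - i))) = s * of_real (\<Sum>i\<in>{1..?p}. 1 / W i (?p + 1 - i))"
    by (simp add: sum_distrib_left divide_inverse)
  also have "\<dots> = s / of_real (?T 1 1)"
    unfolding diag by (simp add: divide_inverse)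
  moreover have "(\<Sum>(i, j)\<in>?Off. 1 / complex_of_real (W i j)) = of_real (\<Sum>(i, j)\<in>?Off. 1 / W i j)"
    by (simp add: of_real_sum split_def)
  ultimately show ?thesis
    unfolding Let_def energy by simp
qed

end
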